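(* For every graph $G$ and every tree $F$, $\chi_c^{\bullet}(G\,\square\, F)\leq \chi_c^{\bullet}(G)+1$, where $\square$ denotes the Cartesian product of graphs.
   Context: All graphs are finite and simple. A correspondence-cover of a graph $G$ is a pair $(L,H)$ where $H$ is a graph and $L$ maps each $v\in V(G)$ to a subset $L(v)\subseteq V(H)$ such that: the sets $L(v)$ partition $V(H)$; each $L(v)$ induces a clique in $H$; if $uv\notin E(G)$ there are no edges of $H$ between $L(u)$ and $L(v)$; if $uv\in E(G)$ the edges of $H$ between $L(u)$ and $L(v)$ form a matching. The cover is $k$-fold if $|L(v)|=k$ for all $v$. An independent transversal is an independent set of $H$ containing exactly one vertex of each $L(v)$. A cover has a fractional packing if there is a probability distribution on independent transversals $I$ with $\Pr(x\in I)=1/|L(v)|$ for all $v$ and $x\in L(v)$. $\chi_c^{\bullet}(G)$ is the least $k\ge1$ such that every $k$-fold correspondence-cover of $G$ has a fractional packing. *)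

theory Defs
  imports "HOL-Probability.Probability"
begin

definition graph :: "'a set \<Rightarrow> ('a \<Rightarrow> 'a \<Rightarrow> bool) \<Rightarrow> bool" where
  "graph V E \<longleftrightarrow> finite V \<and> (\<forall>u v. E u v \<longrightarrow> u \<in> V \<and> v \<in> V)
      \<and> (\<forall>u v. E u v \<longrightarrow> E v u) \<and> (\<forall>v. \<not> E v v)"

definition connected_graph :: "'a set \<Rightarrow> ('a \<Rightarrow> 'a \<Rightarrow> bool) \<Rightarrow> bool" where
  "connected_graph V E \<longleftrightarrow> (\<forall>u\<in>V. \<forall>v\<in>V. E\<^sup>*\<^sup>* u v)"

definition is_cycle :: "'a set \<Rightarrow> ('a \<Rightarrow> 'a \<Rightarrow> bool) \<Rightarrow> 'a list \<Rightarrow> bool" where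
  "is_cycle V E cs \<longleftrightarrow> length cs \<ge> 3 \<and> distinct cs \<and> set cs \<subseteq> V
      \<and> (\<forall>i. Suc i < length cs \<longrightarrow> E (cs ! i) (cs ! Suc i))
      \<and> E (last cs) (hd cs)"

definition tree :: "'a set \<Rightarrow> ('a \<Rightarrow> 'a \<Rightarrow> bool) \<Rightarrow> bool" where
  "tree V E \<longleftrightarrow> graph V E \<and> V \<noteq> {} \<and> connected_graph V E \<and> (\<nexists>cs. is_cycle V E cs)"

definition cart_prod_edges ::
  "('a \<Rightarrow> 'a \<Rightarrow> bool) \<Rightarrow> ('c \<Rightarrow> 'c \<Rightarrow> bool) \<Rightarrow> ('a \<times> 'c) \<Rightarrow> ('a \<times> 'c) \<Rightarrow> bool" where
  "cart_prod_edges E F p q \<longleftrightarrow>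
     (fst p = fst q \<and> F (snd p) (snd q)) \<or> (snd p = snd q \<and> E (fst p) (fst q))"

definition corr_cover ::
  "'a set \<Rightarrow> ('a \<Rightarrow> 'a \<Rightarrow> bool) \<Rightarrow> ('a \<Rightarrow> 'b set) \<Rightarrow> 'b set \<Rightarrow> ('b \<Rightarrow> 'b \<Rightarrow> bool) \<Rightarrow> bool" where
  "corr_cover V E L VH EH \<longleftrightarrow>
     graph VH EH
     \<and> (\<forall>v\<in>V. L v \<noteq> {})
     \<and> VH = (\<Union>v\<in>V. L v)
     \<and> (\<forall>u\<in>V. \<forall>v\<in>V. u \<noteq> v \<longrightarrow> L u \<inter> L v = {})
     \<and> (\<forall>v\<in>V. \<forall>x\<in>L v. \<forall>y\<in>L v. x \<noteq> y \<longrightarrow> EH x y)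
     \<and> (\<forall>u\<in>V. \<forall>v\<in>V. u \<noteq> v \<and> \<not> E u v \<longrightarrow> (\<forall>x\<in>L u. \<forall>y\<in>L v. \<not> EH x y))
     \<and> (\<forall>u\<in>V. \<forall>v\<in>V. E u v \<longrightarrow>
          (\<forall>x\<in>L u. \<forall>y1\<in>L v. \<forall>y2\<in>L v. EH x y1 \<and> EH x y2 \<longrightarrow> y1 = y2)
        \<and> (\<forall>y\<in>L v. \<forall>x1\<in>L u. \<forall>x2\<in>L u. EH x1 y \<and> EH x2 y \<longrightarrow> x1 = x2))"

definition k_fold_cover ::
  "nat \<Rightarrow> 'a set \<Rightarrow> ('a \<Rightarrow> 'a \<Rightarrow> bool) \<Rightarrow> ('a \<Rightarrow> 'b set) \<Rightarrow> 'b set \<Rightarrow> ('b \<Rightarrow> 'b \<Rightarrow> bool) \<Rightarrow> bool" where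
  "k_fold_cover k V E L VH EH \<longleftrightarrow> corr_cover V E L VH EH \<and> (\<forall>v\<in>V. card (L v) = k)"

definition indep_transversal ::
  "'a set \<Rightarrow> ('a \<Rightarrow> 'b set) \<Rightarrow> 'b set \<Rightarrow> ('b \<Rightarrow> 'b \<Rightarrow> bool) \<Rightarrow> 'b set \<Rightarrow> bool" where
  "indep_transversal V L VH EH I \<longleftrightarrow>
     I \<subseteq> VH \<and> (\<forall>x\<in>I. \<forall>y\<in>I. \<not> EH x y) \<and> (\<forall>v\<in>V. card (I \<inter> L v) = 1)"

definition has_fractional_packing ::
  "'a set \<Rightarrow> ('a \<Rightarrow> 'b set) \<Rightarrow> 'b set \<Rightarrow> ('b \<Rightarrow> 'b \<Rightarrow> bool) \<Rightarrow> bool" where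
  "has_fractional_packing V L VH EH \<longleftrightarrow>
     (\<exists>p :: 'b set pmf. set_pmf p \<subseteq> {I. indep_transversal V L VH EH I}
        \<and> (\<forall>v\<in>V. \<forall>x\<in>L v. measure_pmf.prob p {I. x \<in> I} = 1 / real (card (L v))))"

text \<open>The fractional correspondence packing number. Covers are taken with vertices of
  type 'a \<times> nat; every finite cover is isomorphic to one of this type.\<close>
definition chi_c_bullet :: "'a set \<Rightarrow> ('a \<Rightarrow> 'a \<Rightarrow> bool) \<Rightarrow> nat" where
  "chi_c_bullet V E = (LEAST k. k \<ge> 1 \<and>
     (\<forall>(L :: 'a \<Rightarrow> ('a \<times> nat) set) VH EH. k_fold_cover k V E L VH EH
        \<longrightarrow> has_fractional_packing V L VH EH))"

end

theory Submission
  imports Defs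
begin

text \<open>Let k \<ge> \<chi>(G) and take a (k+1)-fold cover of G \<box> F. Order the vertices of the tree F so
  that each vertex f has at most one earlier neighbour g, and build the random transversal layer by
  layer. Suppose the transversal I of the earlier layers already hits every cover vertex with
  probability 1/(k+1). In each list L (v, f) at most one vertex can be adjacent to I, namely the
  partner of the vertex chosen in L (v, g); it is uniformly distributed. Deleting it leaves a k-fold
  cover of G, whose fractional packing picks each remaining vertex with probability 1/k, so every
  vertex of the new layer is picked with probability (1 - 1/(k+1)) / k = 1/(k+1).
  If no k works for G, none works for G \<box> F either, since a packing of the product restricts to a
  layer.\<close>

lemma measure_bind_pmf:
  "measure_pmf.prob (bind_pmf M N) X = (\<integral>x. measure_pmf.prob (N x) X \<partial>measure_pmf M)"
proof -
  have int: "integrable (measure_pmf M) (\<lambda>x. measure_pmf.prob (N x) X)"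
    by (rule measure_pmf.integrable_const_bound[where B=1]) auto
  have "ennreal (measure_pmf.prob (bind_pmf M N) X) = emeasure (bind_pmf M N) X"
    by (simp add: measure_pmf.emeasure_eq_measure)
  also have "\<dots> = (\<integral>\<^sup>+x. ennreal (measure_pmf.prob (N x) X) \<partial>M)"
    by (subst emeasure_bind_pmf) (simp add: measure_pmf.emeasure_eq_measure)
  also have "\<dots> = ennreal (\<integral>x. measure_pmf.prob (N x) X \<partial>measure_pmf M)"
    by (rule nn_integral_eq_integral[OF int]) auto
  finally show ?thesis by simp
qed

lemma measure_pmf_prob_cong:
  assumes "\<And>x. x \<in> set_pmf p \<Longrightarrow> x \<in> A \<longleftrightarrow> x \<in> B"
  shows "measure_pmf.prob p A = measure_pmf.prob p B"
proof -
  have "A \<inter> set_pmf p = B \<inter> set_pmf p" using assms by blast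
  thus ?thesis by (metis measure_Int_set_pmf)
qed

lemma measure_pmf_prob_not:
  "measure_pmf.prob M {z. \<not> P z} = 1 - measure_pmf.prob M {z. P z}"
  by (metis Collect_neg_eq Compl_eq_Diff_UNIV UNIV_I measure_pmf.prob_compl
      sets_measure_pmf space_measure_pmf)

lemma integral_pmf_cong:
  assumes "\<And>x. x \<in> set_pmf M \<Longrightarrow> f x = g x"
  shows "(\<integral>x. f x \<partial>measure_pmf M) = (\<integral>x. g x \<partial>measure_pmf M)"
  using assms by (intro integral_cong_AE) (auto simp: AE_measure_pmf_iff)

definition is_path :: "('a \<Rightarrow> 'a \<Rightarrow> bool) \<Rightarrow> 'a set \<Rightarrow> 'a list \<Rightarrow> bool" where
  "is_path EF S cs \<longleftrightarrow> cs \<noteq> [] \<and> distinct cs \<and> set cs \<subseteq> S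
     \<and> (\<forall>i. Suc i < length cs \<longrightarrow> EF (cs ! i) (cs ! Suc i))"

lemma longest_path_exists:
  assumes "finite S" and "S \<noteq> {}"
  shows "\<exists>cs. is_path EF S cs \<and> (\<forall>c. is_path EF S c \<longrightarrow> length c \<le> length cs)"
proof -
  let ?P = "{cs. is_path EF S cs}"
  have "?P \<subseteq> {xs. set xs \<subseteq> S \<and> length xs \<le> card S}"
    unfolding is_path_def using assms(1) by (auto simp: distinct_card[symmetric] intro: card_mono)
  hence fin: "finite ?P" using finite_lists_length_le[OF assms(1)] by (rule finite_subset)
  obtain s where "s \<in> S" using assms(2) by blast
  hence "[s] \<in> ?P" unfolding is_path_def by auto
  hence "Max (length ` ?P) \<in> length ` ?P" using fin by (intro Max_in) auto
  then obtain cs where "cs \<in> ?P" "length cs = Max (length ` ?P)" by (metis imageE)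
  thus ?thesis using fin by auto
qed

lemma is_path_snoc:
  assumes "is_path EF S cs" "u \<in> S" "u \<notin> set cs" "EF (last cs) u"
  shows "is_path EF S (cs @ [u])"
  unfolding is_path_def
proof (intro conjI allI impI)
  show "distinct (cs @ [u])" "set (cs @ [u]) \<subseteq> S" using assms unfolding is_path_def by auto
  fix i assume i: "Suc i < length (cs @ [u])"
  show "EF ((cs @ [u]) ! i) ((cs @ [u]) ! Suc i)"
  proof (cases "Suc i < length cs")
    case True thus ?thesis using assms(1) unfolding is_path_def by (simp add: nth_append)
  next
    case False
    hence "i = length cs - 1" "Suc i = length cs" using i by simp_all
    thus ?thesis using assms(1,4) unfolding is_path_def by (simp add: nth_append last_conv_nth)
  qed
qed simp

lemma is_cycle_drop:
  assumes "is_path EF S cs" "S \<subseteq> VF" "j + 3 \<le> length cs" "EF (last cs) (cs ! j)"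
  shows "is_cycle VF EF (drop j cs)"
  unfolding is_cycle_def
proof (intro conjI allI impI)
  show "3 \<le> length (drop j cs)" "distinct (drop j cs)" "set (drop j cs) \<subseteq> VF"
    using assms(1-3) unfolding is_path_def by (auto dest: in_set_dropD)
  show "EF (last (drop j cs)) (hd (drop j cs))" using assms(3,4) by (simp add: hd_drop_conv_nth)
  fix i assume "Suc i < length (drop j cs)"
  thus "EF (drop j cs ! i) (drop j cs ! Suc i)" using assms(1) unfolding is_path_def by simp
qed

text \<open>The end of a longest path in S has at most one neighbour in S: a second one would either
  extend the path or close a cycle.\<close>
lemma acyclic_subset_has_leaf:
  assumes G: "graph VF EF" and acyc: "\<nexists>cs. is_cycle VF EF cs" and SV: "S \<subseteq> VF" and ne: "S \<noteq> {}"
  shows "\<exists>f\<in>S. \<forall>g1\<in>S. \<forall>g2\<in>S. EF f g1 \<and> EF f g2 \<longrightarrow> g1 = g2"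
proof -
  have "finite S" using G SV unfolding graph_def by (meson finite_subset)
  then obtain cs where cs: "is_path EF S cs" and longest: "\<And>c. is_path EF S c \<Longrightarrow> length c \<le> length cs"
    using longest_path_exists ne by blast
  define n where "n = length cs"
  have w: "last cs \<in> S" "last cs = cs ! (n - 1)"
    using cs unfolding is_path_def n_def by (auto simp: last_conv_nth)
  have "u = cs ! (n - 2)" if u: "u \<in> S" and wu: "EF (last cs) u" for u
  proof -
    have "u \<in> set cs"
    proof (rule ccontr)
      assume "u \<notin> set cs"
      from longest[OF is_path_snoc[OF cs u this wu]] show False by simp
    qed
    then obtain j where j: "j < n" "cs ! j = u" unfolding n_def by (auto simp: in_set_conv_nth)
    have "j \<noteq> n - 1" using j w wu G unfolding graph_def by auto
    moreover have "\<not> j + 3 \<le> n" using is_cycle_drop[OF cs SV] acyc wu j unfolding n_def by blast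
    ultimately have "j = n - 2" using j(1) by linarith
    thus ?thesis using j(2) by simp
  qed
  thus ?thesis using w(1) by metis
qed

lemma matching_extends_to_bij:
  assumes fA: "finite A" and fB: "finite B" and cAB: "card A = card B"
    and m1: "\<And>y x1 x2. y \<in> A \<Longrightarrow> x1 \<in> B \<Longrightarrow> x2 \<in> B \<Longrightarrow> M y x1 \<Longrightarrow> M y x2 \<Longrightarrow> x1 = x2"
    and m2: "\<And>x y1 y2. x \<in> B \<Longrightarrow> y1 \<in> A \<Longrightarrow> y2 \<in> A \<Longrightarrow> M y1 x \<Longrightarrow> M y2 x \<Longrightarrow> y1 = y2"
  shows "\<exists>\<sigma>. bij_betw \<sigma> A B \<and> (\<forall>y\<in>A. \<forall>x\<in>B. M y x \<longrightarrow> x = \<sigma> y)"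
proof -
  define C where "C = {y\<in>A. \<exists>x\<in>B. M y x}"
  define m where "m = (\<lambda>y. THE x. x \<in> B \<and> M y x)"
  have mu: "m y = x" if "y \<in> A" "x \<in> B" "M y x" for y x
    unfolding m_def using that m1 by (intro the_equality) blast+
  have mC: "m y \<in> B \<and> M y (m y)" if yC: "y \<in> C" for y
  proof -
    obtain x where "x \<in> B" "M y x" using yC unfolding C_def by blast
    thus ?thesis using mu yC unfolding C_def by blast
  qed
  have CA: "C \<subseteq> A" unfolding C_def by auto
  have injm: "inj_on m C"
  proof (rule inj_onI)
    fix y1 y2 assume "y1 \<in> C" "y2 \<in> C" "m y1 = m y2"
    thus "y1 = y2" using mC[of y1] mC[of y2] m2[of "m y1" y1 y2] CA by auto
  qed
  have mCB: "m ` C \<subseteq> B" using mC by auto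
  have "card (A - C) = card (B - m ` C)"
    using cAB card_image[OF injm] fA fB CA mCB
    by (metis card_Diff_subset finite_subset)
  then obtain \<tau> where tau: "bij_betw \<tau> (A - C) (B - m ` C)"
    using finite_same_card_bij fA fB by (metis finite_Diff)
  define \<sigma> where "\<sigma> = (\<lambda>y. if y \<in> C then m y else \<tau> y)"
  have b1: "bij_betw \<sigma> C (m ` C)"
    unfolding bij_betw_def using injm by (auto simp: \<sigma>_def inj_on_def)
  have b2: "bij_betw \<sigma> (A - C) (B - m ` C)"
    using tau by (rule bij_betw_cong[THEN iffD1, rotated]) (auto simp: \<sigma>_def)
  have "bij_betw \<sigma> (C \<union> (A - C)) (m ` C \<union> (B - m ` C))"
    by (rule bij_betw_combine[OF b1 b2]) auto
  moreover have "C \<union> (A - C) = A" "m ` C \<union> (B - m ` C) = B" using CA mCB by auto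
  moreover have "\<forall>y\<in>A. \<forall>x\<in>B. M y x \<longrightarrow> x = \<sigma> y"
  proof (intro ballI impI)
    fix y x assume "y \<in> A" "x \<in> B" "M y x"
    moreover hence "y \<in> C" unfolding C_def by auto
    ultimately show "x = \<sigma> y" using mu unfolding \<sigma>_def by auto
  qed
  ultimately show ?thesis by auto
qed

definition is_fractional_packing ::
  "'a set \<Rightarrow> ('a \<Rightarrow> 'b set) \<Rightarrow> 'b set \<Rightarrow> ('b \<Rightarrow> 'b \<Rightarrow> bool) \<Rightarrow> 'b set pmf \<Rightarrow> bool" where
  "is_fractional_packing V L VH EH p \<longleftrightarrow>
     set_pmf p \<subseteq> {I. indep_transversal V L VH EH I}
     \<and> (\<forall>v\<in>V. \<forall>x\<in>L v. measure_pmf.prob p {I. x \<in> I} = 1 / real (card (L v)))"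

lemma has_fractional_packing_iff:
  "has_fractional_packing V L VH EH \<longleftrightarrow> (\<exists>p. is_fractional_packing V L VH EH p)"
  unfolding has_fractional_packing_def is_fractional_packing_def ..

lemma indep_transversalD:
  assumes "indep_transversal V L VH EH I"
  shows "I \<subseteq> VH" and "x \<in> I \<Longrightarrow> y \<in> I \<Longrightarrow> \<not> EH x y" and "v \<in> V \<Longrightarrow> card (I \<inter> L v) = 1"
  using assms unfolding indep_transversal_def by auto

definition induced_edges :: "'b set \<Rightarrow> ('b \<Rightarrow> 'b \<Rightarrow> bool) \<Rightarrow> 'b \<Rightarrow> 'b \<Rightarrow> bool" where
  "induced_edges A R x y \<longleftrightarrow> x \<in> A \<and> y \<in> A \<and> R x y"

locale correspondence_cover =
  fixes V :: "'a set" and E :: "'a \<Rightarrow> 'a \<Rightarrow> bool"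
    and L :: "'a \<Rightarrow> 'b set" and VH :: "'b set" and EH :: "'b \<Rightarrow> 'b \<Rightarrow> bool"
  assumes cover: "corr_cover V E L VH EH"
begin

lemma graph_H: "graph VH EH"
  and VH_eq: "VH = (\<Union>v\<in>V. L v)"
  and L_nonempty: "v \<in> V \<Longrightarrow> L v \<noteq> {}"
  and L_disjoint: "u \<in> V \<Longrightarrow> v \<in> V \<Longrightarrow> u \<noteq> v \<Longrightarrow> L u \<inter> L v = {}"
  and L_clique: "v \<in> V \<Longrightarrow> x \<in> L v \<Longrightarrow> y \<in> L v \<Longrightarrow> x \<noteq> y \<Longrightarrow> EH x y"
  and no_edge_if_nonadjacent:
    "u \<in> V \<Longrightarrow> v \<in> V \<Longrightarrow> u \<noteq> v \<Longrightarrow> \<not> E u v \<Longrightarrow> x \<in> L u \<Longrightarrow> y \<in> L v \<Longrightarrow> \<not> EH x y"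
  and matching_right: "u \<in> V \<Longrightarrow> v \<in> V \<Longrightarrow> E u v \<Longrightarrow> x \<in> L u \<Longrightarrow> y1 \<in> L v \<Longrightarrow> y2 \<in> L v
      \<Longrightarrow> EH x y1 \<Longrightarrow> EH x y2 \<Longrightarrow> y1 = y2"
  and matching_left: "u \<in> V \<Longrightarrow> v \<in> V \<Longrightarrow> E u v \<Longrightarrow> y \<in> L v \<Longrightarrow> x1 \<in> L u \<Longrightarrow> x2 \<in> L u
      \<Longrightarrow> EH x1 y \<Longrightarrow> EH x2 y \<Longrightarrow> x1 = x2"
  using cover unfolding corr_cover_def by (auto 0 0)

lemma EH_sym: "EH x y \<Longrightarrow> EH y x"
  and EH_irrefl: "\<not> EH x x"
  and finite_VH: "finite VH"
  using graph_H unfolding graph_def by auto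

lemma L_subset_VH: "v \<in> V \<Longrightarrow> L v \<subseteq> VH"
  using VH_eq by blast

lemma finite_L: "v \<in> V \<Longrightarrow> finite (L v)"
  using L_subset_VH finite_VH by (rule finite_subset)

lemma in_L_unique: "u \<in> V \<Longrightarrow> v \<in> V \<Longrightarrow> x \<in> L u \<Longrightarrow> x \<in> L v \<Longrightarrow> u = v"
  using L_disjoint by blast

end

locale k_fold_correspondence_cover = correspondence_cover +
  fixes k :: nat
  assumes card_L: "v \<in> V \<Longrightarrow> card (L v) = k"

lemma k_fold_cover_iff_locale:
  "k_fold_cover k V E L VH EH \<longleftrightarrow> k_fold_correspondence_cover V E L VH EH k"
  unfolding k_fold_cover_def k_fold_correspondence_cover_def correspondence_cover_def
    k_fold_correspondence_cover_axioms_def by blast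

definition covers_pack :: "'b itself \<Rightarrow> nat \<Rightarrow> 'a set \<Rightarrow> ('a \<Rightarrow> 'a \<Rightarrow> bool) \<Rightarrow> bool" where
  "covers_pack (T :: 'b itself) k V E \<longleftrightarrow>
     (\<forall>(L :: 'a \<Rightarrow> 'b set) VH EH. k_fold_cover k V E L VH EH \<longrightarrow> has_fractional_packing V L VH EH)"

lemma chi_c_bullet_altdef:
  fixes V :: "'a set"
  shows "chi_c_bullet V E = (LEAST k. k \<ge> 1 \<and> covers_pack TYPE('a \<times> nat) k V E)"
  unfolding chi_c_bullet_def covers_pack_def ..

context k_fold_correspondence_cover
begin

lemma image_preimage_L:
  assumes "bij_betw \<Psi> VH0 VH" "v \<in> V"
  shows "\<Psi> ` (VH0 \<inter> \<Psi> -` L v) = L v"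
  using assms L_subset_VH unfolding bij_betw_def by blast

lemma k_fold_cover_pullback:
  assumes bij: "bij_betw \<Psi> VH0 VH" and L0: "\<And>v. v \<in> V \<Longrightarrow> L0 v = VH0 \<inter> \<Psi> -` L v"
    and EH0: "\<And>a b. EH0 a b \<longleftrightarrow> a \<in> VH0 \<and> b \<in> VH0 \<and> EH (\<Psi> a) (\<Psi> b)"
  shows "k_fold_cover k V E L0 VH0 EH0"
proof -
  have inj: "inj_on \<Psi> VH0" and \<Psi>_VH0: "\<Psi> ` VH0 = VH" using bij unfolding bij_betw_def by auto
  have L0_iff: "a \<in> L0 v \<longleftrightarrow> a \<in> VH0 \<and> \<Psi> a \<in> L v" if "v \<in> V" for v a
    using L0[OF that] by blast
  have \<Psi>_eq: "\<And>a b. a \<in> VH0 \<Longrightarrow> b \<in> VH0 \<Longrightarrow> \<Psi> a = \<Psi> b \<Longrightarrow> a = b"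
    using inj by (rule inj_onD)
  show ?thesis unfolding k_fold_cover_def corr_cover_def
  proof (intro conjI ballI allI impI)
    show "graph VH0 EH0" unfolding graph_def
      using bij_betw_finite[OF bij] finite_VH EH_sym EH_irrefl EH0 by auto
    show "VH0 = (\<Union>v\<in>V. L0 v)" using \<Psi>_VH0 VH_eq L0_iff by blast
  next
    fix v assume v: "v \<in> V"
    show "L0 v \<noteq> {}" using L_nonempty[OF v] image_preimage_L[OF bij v] L0[OF v] by auto
    have "card (L0 v) = card (\<Psi> ` L0 v)"
      using inj_on_subset[OF inj] L0[OF v] by (simp add: card_image)
    thus "card (L0 v) = k" using image_preimage_L[OF bij v] L0[OF v] card_L[OF v] by simp
  next
    fix u v assume "u \<in> V" "v \<in> V" "u \<noteq> v"
    thus "L0 u \<inter> L0 v = {}" using L_disjoint[of u v] L0_iff by blast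
  next
    fix v x y assume "v \<in> V" "x \<in> L0 v" "y \<in> L0 v" "x \<noteq> y"
    thus "EH0 x y" using L_clique[of v "\<Psi> x" "\<Psi> y"] \<Psi>_eq L0_iff EH0 by blast
  next
    fix u v x y assume "u \<in> V" "v \<in> V" "u \<noteq> v \<and> \<not> E u v" "x \<in> L0 u" "y \<in> L0 v"
    thus "\<not> EH0 x y" using no_edge_if_nonadjacent[of u v "\<Psi> x" "\<Psi> y"] L0_iff EH0 by blast
  next
    fix u v x y1 y2 assume "u \<in> V" "v \<in> V" "E u v" "x \<in> L0 u" "y1 \<in> L0 v" "y2 \<in> L0 v"
      "EH0 x y1 \<and> EH0 x y2"
    thus "y1 = y2" using matching_right[of u v "\<Psi> x" "\<Psi> y1" "\<Psi> y2"] \<Psi>_eq L0_iff EH0 by blast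
  next
    fix u v y x1 x2 assume "u \<in> V" "v \<in> V" "E u v" "y \<in> L0 v" "x1 \<in> L0 u" "x2 \<in> L0 u"
      "EH0 x1 y \<and> EH0 x2 y"
    thus "x1 = x2" using matching_left[of u v "\<Psi> y" "\<Psi> x1" "\<Psi> x2"] \<Psi>_eq L0_iff EH0 by blast
  qed
qed

lemma fractional_packing_pushforward:
  assumes bij: "bij_betw \<Psi> VH0 VH" and L0: "\<And>v. v \<in> V \<Longrightarrow> L0 v = VH0 \<inter> \<Psi> -` L v"
    and EH0: "\<And>a b. EH0 a b \<longleftrightarrow> a \<in> VH0 \<and> b \<in> VH0 \<and> EH (\<Psi> a) (\<Psi> b)"
    and pack: "has_fractional_packing V L0 VH0 EH0"
  shows "has_fractional_packing V L VH EH"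
proof -
  have inj: "inj_on \<Psi> VH0" and img: "\<And>v. v \<in> V \<Longrightarrow> \<Psi> ` L0 v = L v" and VH: "\<Psi> ` VH0 = VH"
    using bij image_preimage_L[OF bij] L0 unfolding bij_betw_def by auto
  obtain p0 where p0s: "set_pmf p0 \<subseteq> {I. indep_transversal V L0 VH0 EH0 I}"
    and p0m: "\<And>v x. v \<in> V \<Longrightarrow> x \<in> L0 v \<Longrightarrow> measure_pmf.prob p0 {I. x \<in> I} = 1 / real (card (L0 v))"
    using pack unfolding has_fractional_packing_def by blast
  have p0_sub: "I \<subseteq> VH0" if "I \<in> set_pmf p0" for I
    using that p0s unfolding indep_transversal_def by blast
  show ?thesis unfolding has_fractional_packing_def
  proof (intro exI[of _ "map_pmf (image \<Psi>) p0"] conjI ballI subsetI)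
    fix J assume "J \<in> set_pmf (map_pmf (image \<Psi>) p0)"
    then obtain I where I: "I \<in> set_pmf p0" "J = \<Psi> ` I" by auto
    have it: "indep_transversal V L0 VH0 EH0 I"
      using I p0s by auto
    have "card (J \<inter> L v) = 1" if v: "v \<in> V" for v
    proof -
      have "J \<inter> L v = \<Psi> ` (I \<inter> L0 v)"
      proof (intro equalityI subsetI)
        fix y assume "y \<in> J \<inter> L v"
        then obtain a where "a \<in> I" "y = \<Psi> a" "\<Psi> a \<in> L v" using I(2) by auto
        thus "y \<in> \<Psi> ` (I \<inter> L0 v)" using p0_sub[OF I(1)] L0[OF v] by blast
      qed (use I(2) L0[OF v] in blast)
      moreover have "inj_on \<Psi> (I \<inter> L0 v)"
        by (rule inj_on_subset[OF inj]) (use p0_sub[OF I(1)] in blast)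
      ultimately show ?thesis using it v unfolding indep_transversal_def by (simp add: card_image)
    qed
    thus "J \<in> {I. indep_transversal V L VH EH I}"
      using it I p0_sub[OF I(1)] VH EH0 unfolding indep_transversal_def by blast
  next
    fix v x assume v: "v \<in> V" and x: "x \<in> L v"
    obtain a where a: "a \<in> L0 v" "x = \<Psi> a" using img[OF v] x by blast
    have aVH0: "a \<in> VH0" using a(1) L0[OF v] by blast
    have "measure_pmf.prob (map_pmf (image \<Psi>) p0) {J. x \<in> J} = measure_pmf.prob p0 {I. \<Psi> a \<in> \<Psi> ` I}"
      using a(2) by simp
    also have "\<dots> = measure_pmf.prob p0 {I. a \<in> I}"
      using inj_on_image_mem_iff[OF inj aVH0 p0_sub] by (intro measure_pmf_prob_cong) simp
    also have "\<dots> = 1 / real (card (L0 v))" using p0m[OF v a(1)] .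
    also have "card (L0 v) = card (L v)"
      using img[OF v] card_image inj_on_subset[OF inj] L0[OF v] by (metis Int_lower1)
    finally show "measure_pmf.prob (map_pmf (image \<Psi>) p0) {I. x \<in> I} = 1 / real (card (L v))" .
  qed
qed

lemma enumeration_of_cover:
  obtains \<Psi> where "bij_betw \<Psi> (V \<times> {0..<k}) VH"
    and "\<And>v. v \<in> V \<Longrightarrow> {v} \<times> {0..<k} = (V \<times> {0..<k}) \<inter> \<Psi> -` L v"
proof -
  have "\<forall>v\<in>V. \<exists>g. bij_betw g {0..<k} (L v)"
    using finite_L card_L ex_bij_betw_nat_finite by metis
  then obtain \<phi> where \<phi>: "\<And>v. v \<in> V \<Longrightarrow> bij_betw (\<phi> v) {0..<k} (L v)" by metis
  have \<phi>_in: "\<phi> v i \<in> L v" if "v \<in> V" "i < k" for v i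
    using bij_betwE[OF \<phi>[OF that(1)]] that(2) by simp
  define \<Psi> where "\<Psi> = (\<lambda>(v, i). \<phi> v i)"
  have "{v} \<times> {0..<k} = (V \<times> {0..<k}) \<inter> \<Psi> -` L v" if v: "v \<in> V" for v
    using v \<phi>_in unfolding \<Psi>_def by (auto intro: in_L_unique[OF _ v \<phi>_in])
  moreover have "bij_betw \<Psi> (V \<times> {0..<k}) VH"
  proof (rule bij_betw_imageI)
    show "inj_on \<Psi> (V \<times> {0..<k})"
    proof (rule inj_onI, clarify)
      fix u i v j assume uv: "u \<in> V" "i \<in> {0..<k}" "v \<in> V" "j \<in> {0..<k}"
        and eq: "\<Psi> (u, i) = \<Psi> (v, j)"
      have "u = v"
        using in_L_unique[OF uv(1) uv(3), of "\<phi> u i"] \<phi>_in[of u i] \<phi>_in[of v j] eq uv unfolding \<Psi>_def by simp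
      moreover have "i = j" using eq \<phi>[of v] uv inj_onD unfolding \<Psi>_def bij_betw_def \<open>u = v\<close> by fastforce
      ultimately show "u = v \<and> i = j" ..
    qed
    have "\<Psi> ` (V \<times> {0..<k}) = (\<Union>v\<in>V. \<phi> v ` {0..<k})" unfolding \<Psi>_def by force
    also have "\<dots> = VH" using \<phi> VH_eq unfolding bij_betw_def by simp
    finally show "\<Psi> ` (V \<times> {0..<k}) = VH" .
  qed
  ultimately show ?thesis using that by blast
qed

lemma k_fold_cover_layers:
  assumes F: "graph VF EF"
    and EH2: "\<And>a b. EH2 a b \<longleftrightarrow> fst a = fst b \<and> fst a \<in> VF \<and> EH (snd a) (snd b)"
  shows "k_fold_cover k (V \<times> VF) (cart_prod_edges E EF) (\<lambda>w. Pair (snd w) ` L (fst w)) (VF \<times> VH) EH2"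
    (is "k_fold_cover k ?W ?EW ?L2 _ _")
proof -
  have L2: "a \<in> ?L2 w \<longleftrightarrow> fst a = snd w \<and> snd a \<in> L (fst w)" for a w by (cases a) auto
  have irrF: "\<not> EF f f" and finVF: "finite VF" for f using F unfolding graph_def by auto
  have EH_VH: "EH x y \<Longrightarrow> x \<in> VH \<and> y \<in> VH" for x y using graph_H unfolding graph_def by blast
  show ?thesis unfolding k_fold_cover_def corr_cover_def
  proof (intro conjI ballI allI impI)
    show "graph (VF \<times> VH) EH2" unfolding graph_def
      using finVF finite_VH EH_VH EH_sym EH_irrefl EH2 by auto
    show "VF \<times> VH = (\<Union>w\<in>?W. ?L2 w)" using VH_eq by auto
  next
    fix w assume w: "w \<in> ?W"
    show "?L2 w \<noteq> {}" using L_nonempty w by auto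
    show "card (?L2 w) = k" using card_L[of "fst w"] w by (auto simp: card_image inj_on_def)
  next
    fix w w' assume "w \<in> ?W" "w' \<in> ?W" "w \<noteq> w'"
    thus "?L2 w \<inter> ?L2 w' = {}"
      using L2 in_L_unique[of "fst w" "fst w'"] by (auto simp: prod_eq_iff)
  next
    fix w a b assume "w \<in> ?W" "a \<in> ?L2 w" "b \<in> ?L2 w" "a \<noteq> b"
    thus "EH2 a b" using L2 L_clique[of "fst w" "snd a" "snd b"] EH2 by (auto simp: prod_eq_iff)
  next
    fix w w' a b assume "w \<in> ?W" "w' \<in> ?W" "w \<noteq> w' \<and> \<not> ?EW w w'" "a \<in> ?L2 w" "b \<in> ?L2 w'"
    thus "\<not> EH2 a b" using L2 no_edge_if_nonadjacent[of "fst w" "fst w'" "snd a" "snd b"] EH2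
      by (auto simp: prod_eq_iff cart_prod_edges_def)
  next
    fix w w' a b1 b2 assume "w \<in> ?W" "w' \<in> ?W" "?EW w w'" "a \<in> ?L2 w" "b1 \<in> ?L2 w'" "b2 \<in> ?L2 w'"
      "EH2 a b1 \<and> EH2 a b2"
    thus "b1 = b2" using L2 irrF matching_right[of "fst w" "fst w'" "snd a" "snd b1" "snd b2"] EH2
      by (auto simp: prod_eq_iff cart_prod_edges_def)
  next
    fix w w' b a1 a2 assume "w \<in> ?W" "w' \<in> ?W" "?EW w w'" "b \<in> ?L2 w'" "a1 \<in> ?L2 w" "a2 \<in> ?L2 w"
      "EH2 a1 b \<and> EH2 a2 b"
    thus "a1 = a2" using L2 irrF matching_left[of "fst w" "fst w'" "snd b" "snd a1" "snd a2"] EH2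
      by (auto simp: prod_eq_iff cart_prod_edges_def)
  qed
qed

end

text \<open>Every k-fold cover is isomorphic to one on the vertex set V \<times> {0..<k}.\<close>
lemma covers_pack_change_type:
  fixes V :: "'a set"
  assumes "covers_pack TYPE('a \<times> nat) k V E"
  shows "covers_pack TYPE('b) k V E"
  unfolding covers_pack_def
proof (intro allI impI)
  fix L :: "'a \<Rightarrow> 'b set" and VH EH
  assume "k_fold_cover k V E L VH EH"
  then interpret k_fold_correspondence_cover V E L VH EH k by (simp add: k_fold_cover_iff_locale)
  obtain \<Psi> where bij: "bij_betw \<Psi> (V \<times> {0..<k}) VH"
    and L0: "\<And>v. v \<in> V \<Longrightarrow> {v} \<times> {0..<k} = (V \<times> {0..<k}) \<inter> \<Psi> -` L v"
    using enumeration_of_cover by blast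
  define EH0 where "EH0 = (\<lambda>a b. a \<in> V \<times> {0..<k} \<and> b \<in> V \<times> {0..<k} \<and> EH (\<Psi> a) (\<Psi> b))"
  have EH0: "EH0 a b \<longleftrightarrow> a \<in> V \<times> {0..<k} \<and> b \<in> V \<times> {0..<k} \<and> EH (\<Psi> a) (\<Psi> b)" for a b
    unfolding EH0_def ..
  have "k_fold_cover k V E (\<lambda>v. {v} \<times> {0..<k}) (V \<times> {0..<k}) EH0"
    using bij L0 EH0 by (rule k_fold_cover_pullback)
  hence "has_fractional_packing V (\<lambda>v. {v} \<times> {0..<k}) (V \<times> {0..<k}) EH0"
    by (rule assms[unfolded covers_pack_def, rule_format])
  with bij L0 EH0 show "has_fractional_packing V L VH EH"
    by (rule fractional_packing_pushforward)
qed

lemma covers_pack_layer: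
  fixes V :: "'a set" and VF :: "'c set"
  assumes pack: "covers_pack TYPE('c \<times> 'b) k (V \<times> VF) (cart_prod_edges E EF)"
    and F: "graph VF EF" and f0: "f0 \<in> VF"
  shows "covers_pack TYPE('b) k V E"
  unfolding covers_pack_def
proof (intro allI impI)
  fix L :: "'a \<Rightarrow> 'b set" and VH EH
  assume "k_fold_cover k V E L VH EH"
  then interpret k_fold_correspondence_cover V E L VH EH k by (simp add: k_fold_cover_iff_locale)
  define L2 where "L2 = (\<lambda>w :: 'a \<times> 'c. Pair (snd w) ` L (fst w))"
  define EH2 where "EH2 = (\<lambda>a b. fst a = fst b \<and> fst a \<in> VF \<and> EH (snd a) (snd b))"
  have "has_fractional_packing (V \<times> VF) L2 (VF \<times> VH) EH2"
    using k_fold_cover_layers[OF F, of EH2] unfolding L2_def EH2_def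
    by (rule pack[unfolded covers_pack_def, rule_format]) simp
  then obtain p2 where p2s: "set_pmf p2 \<subseteq> {I. indep_transversal (V \<times> VF) L2 (VF \<times> VH) EH2 I}"
    and p2m: "\<And>w x. w \<in> V \<times> VF \<Longrightarrow> x \<in> L2 w \<Longrightarrow> measure_pmf.prob p2 {I. x \<in> I} = 1 / real (card (L2 w))"
    unfolding has_fractional_packing_def by blast
  have card_L2: "card (L2 (v, f)) = card (L v)" for v f
    unfolding L2_def by (simp add: card_image inj_on_def)
  show "has_fractional_packing V L VH EH" unfolding has_fractional_packing_def
  proof (intro exI[of _ "map_pmf (\<lambda>I. Pair f0 -` I) p2"] conjI ballI subsetI)
    fix J assume "J \<in> set_pmf (map_pmf (\<lambda>I. Pair f0 -` I) p2)"
    then obtain I where I: "I \<in> set_pmf p2" "J = Pair f0 -` I" by auto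
    have it: "indep_transversal (V \<times> VF) L2 (VF \<times> VH) EH2 I" using I p2s by blast
    have "card (J \<inter> L v) = 1" if v: "v \<in> V" for v
    proof -
      have "Pair f0 ` (J \<inter> L v) = I \<inter> L2 (v, f0)" using I(2) unfolding L2_def by auto
      hence "card (J \<inter> L v) = card (I \<inter> L2 (v, f0))" by (metis card_image inj_on_def prod.inject)
      thus ?thesis using it v f0 unfolding indep_transversal_def by simp
    qed
    moreover have "\<not> EH x y" if "x \<in> J" "y \<in> J" for x y
    proof -
      have "(f0, x) \<in> I" "(f0, y) \<in> I" using that I(2) by auto
      thus ?thesis using it f0 unfolding indep_transversal_def EH2_def by force
    qed
    moreover have "J \<subseteq> VH" using it I(2) unfolding indep_transversal_def by auto
    ultimately show "J \<in> {I. indep_transversal V L VH EH I}"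
      unfolding indep_transversal_def by blast
  next
    fix v z assume "v \<in> V" "z \<in> L v"
    thus "measure_pmf.prob (map_pmf (\<lambda>I. Pair f0 -` I) p2) {I. z \<in> I} = 1 / real (card (L v))"
      using p2m[of "(v, f0)" "(f0, z)"] f0 card_L2 unfolding L2_def by simp
  qed
qed

locale product_cover =
  k_fold_correspondence_cover "V \<times> VF" "cart_prod_edges E EF" L VH EH "Suc k"
  for V :: "'a set" and E :: "'a \<Rightarrow> 'a \<Rightarrow> bool" and VF :: "'c set" and EF :: "'c \<Rightarrow> 'c \<Rightarrow> bool"
    and L :: "'a \<times> 'c \<Rightarrow> 'b set" and VH :: "'b set" and EH :: "'b \<Rightarrow> 'b \<Rightarrow> bool" and k :: nat +
  assumes graph_F: "graph VF EF" and acyclic_F: "\<nexists>cs. is_cycle VF EF cs"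
    and k_pos: "k \<ge> 1" and G_packs: "covers_pack TYPE('b) k V E"
begin

lemma layers_disjoint:
  assumes "u \<in> V" "v \<in> V" "s \<in> VF" "f \<in> VF" "s \<noteq> f" "x \<in> L (u, s)"
  shows "x \<notin> L (v, f)"
  using assms L_disjoint[of "(u, s)" "(v, f)"] by auto

lemma edge_between_layers:
  assumes "u \<in> V" "v \<in> V" "s \<in> VF" "f \<in> VF" "s \<noteq> f"
    and "y \<in> L (u, s)" "x \<in> L (v, f)" "EH y x"
  shows "u = v" and "EF s f"
proof -
  have "cart_prod_edges E EF (u, s) (v, f)"
    using no_edge_if_nonadjacent[of "(u, s)" "(v, f)" y x] assms by auto
  thus "u = v" "EF s f" using assms(5) unfolding cart_prod_edges_def by auto
qed

definition partial_packing :: "'c set \<Rightarrow> 'b set pmf \<Rightarrow> bool" where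
  "partial_packing S p \<longleftrightarrow> is_fractional_packing (V \<times> S) L (\<Union>w\<in>V \<times> S. L w) EH p"

lemma partial_packing_transversal:
  "partial_packing S p \<Longrightarrow> I \<in> set_pmf p \<Longrightarrow> indep_transversal (V \<times> S) L (\<Union>w\<in>V \<times> S. L w) EH I"
  unfolding partial_packing_def is_fractional_packing_def by blast

definition blocks :: "'c \<Rightarrow> 'b set \<Rightarrow> ('a \<Rightarrow> 'b) \<Rightarrow> bool" where
  "blocks f I h \<longleftrightarrow> (\<forall>v\<in>V. h v \<in> L (v, f) \<and> (\<forall>y\<in>I. \<forall>x\<in>L (v, f). EH y x \<longrightarrow> x = h v))"

lemma blocks_in_layer: "blocks f I h \<Longrightarrow> v \<in> V \<Longrightarrow> h v \<in> L (v, f)"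
  unfolding blocks_def by blast

definition remaining :: "'c \<Rightarrow> ('a \<Rightarrow> 'b) \<Rightarrow> 'a \<Rightarrow> 'b set" where
  "remaining f h v = L (v, f) - {h v}"

lemma k_fold_cover_remaining:
  assumes f: "f \<in> VF" and h: "\<And>v. v \<in> V \<Longrightarrow> h v \<in> L (v, f)"
  shows "k_fold_cover k V E (remaining f h) (\<Union>v\<in>V. remaining f h v)
           (induced_edges (\<Union>v\<in>V. remaining f h v) EH)"
proof -
  have layer_edge: "cart_prod_edges E EF (u, f) (v, f) \<longleftrightarrow> E u v" for u v
    using graph_F unfolding cart_prod_edges_def graph_def by auto
  show ?thesis unfolding k_fold_cover_def corr_cover_def
  proof (intro conjI ballI allI impI)
    have "(\<Union>v\<in>V. remaining f h v) \<subseteq> VH" using f VH_eq unfolding remaining_def by auto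
    thus "graph (\<Union>v\<in>V. remaining f h v) (induced_edges (\<Union>v\<in>V. remaining f h v) EH)"
      unfolding graph_def induced_edges_def using finite_VH EH_sym EH_irrefl by (auto intro: finite_subset)
    show "(\<Union>v\<in>V. remaining f h v) = (\<Union>v\<in>V. remaining f h v)" ..
  next
    fix v assume v: "v \<in> V"
    show card: "card (remaining f h v) = k"
      using card_L[of "(v, f)"] h[OF v] finite_L[of "(v, f)"] v f unfolding remaining_def by simp
    show "remaining f h v \<noteq> {}" using card k_pos by auto
  next
    fix u v assume "u \<in> V" "v \<in> V" "u \<noteq> v"
    thus "remaining f h u \<inter> remaining f h v = {}"
      using L_disjoint[of "(u, f)" "(v, f)"] f unfolding remaining_def by auto
  next
    fix v x y assume "v \<in> V" "x \<in> remaining f h v" "y \<in> remaining f h v" "x \<noteq> y"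
    thus "induced_edges (\<Union>v\<in>V. remaining f h v) EH x y"
      using L_clique[of "(v, f)" x y] f unfolding remaining_def induced_edges_def by auto
  next
    fix u v x y assume "u \<in> V" "v \<in> V" "u \<noteq> v \<and> \<not> E u v" "x \<in> remaining f h u" "y \<in> remaining f h v"
    thus "\<not> induced_edges (\<Union>v\<in>V. remaining f h v) EH x y"
      using no_edge_if_nonadjacent[of "(u, f)" "(v, f)" x y] f layer_edge
      unfolding remaining_def induced_edges_def by auto
  next
    fix u v x y1 y2 assume "u \<in> V" "v \<in> V" "E u v" "x \<in> remaining f h u"
      "y1 \<in> remaining f h v" "y2 \<in> remaining f h v"
      "induced_edges (\<Union>v\<in>V. remaining f h v) EH x y1 \<and> induced_edges (\<Union>v\<in>V. remaining f h v) EH x y2"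
    thus "y1 = y2" using matching_right[of "(u, f)" "(v, f)" x y1 y2] f layer_edge
      unfolding remaining_def induced_edges_def by auto
  next
    fix u v y x1 x2 assume "u \<in> V" "v \<in> V" "E u v" "y \<in> remaining f h v"
      "x1 \<in> remaining f h u" "x2 \<in> remaining f h u"
      "induced_edges (\<Union>v\<in>V. remaining f h v) EH x1 y \<and> induced_edges (\<Union>v\<in>V. remaining f h v) EH x2 y"
    thus "x1 = x2" using matching_left[of "(u, f)" "(v, f)" y x1 x2] f layer_edge
      unfolding remaining_def induced_edges_def by auto
  qed
qed

definition layer_packing :: "'c \<Rightarrow> ('a \<Rightarrow> 'b) \<Rightarrow> 'b set pmf" where
  "layer_packing f h = (SOME q. is_fractional_packing V (remaining f h) (\<Union>v\<in>V. remaining f h v)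
                               (induced_edges (\<Union>v\<in>V. remaining f h v) EH) q)"

lemma is_fractional_packing_layer_packing:
  assumes "f \<in> VF" and "\<And>v. v \<in> V \<Longrightarrow> h v \<in> L (v, f)"
  shows "is_fractional_packing V (remaining f h) (\<Union>v\<in>V. remaining f h v)
           (induced_edges (\<Union>v\<in>V. remaining f h v) EH) (layer_packing f h)"
proof -
  have "has_fractional_packing V (remaining f h) (\<Union>v\<in>V. remaining f h v)
          (induced_edges (\<Union>v\<in>V. remaining f h v) EH)"
    using k_fold_cover_remaining[OF assms] by (rule G_packs[unfolded covers_pack_def, rule_format])
  thus ?thesis unfolding has_fractional_packing_iff layer_packing_def by (rule someI_ex)
qed

lemma layer_packing_subset:
  assumes "f \<in> VF" "\<And>v. v \<in> V \<Longrightarrow> h v \<in> L (v, f)" "J \<in> set_pmf (layer_packing f h)"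
  shows "J \<subseteq> (\<Union>v\<in>V. remaining f h v)"
  using is_fractional_packing_layer_packing[OF assms(1,2)] assms(3)
  unfolding is_fractional_packing_def indep_transversal_def by blast

context
  fixes S' :: "'c set" and f :: 'c and I J :: "'b set" and h :: "'a \<Rightarrow> 'b"
  assumes S': "S' \<subseteq> VF" and f: "f \<in> VF" "f \<notin> S'"
    and I: "indep_transversal (V \<times> S') L (\<Union>w\<in>V \<times> S'. L w) EH I"
    and h: "blocks f I h"
    and J: "indep_transversal V (remaining f h) (\<Union>v\<in>V. remaining f h v)
              (induced_edges (\<Union>v\<in>V. remaining f h v) EH) J"
begin

lemma old_transversal_avoids_new_layer: "x \<in> I \<Longrightarrow> v \<in> V \<Longrightarrow> x \<notin> L (v, f)"
  using indep_transversalD(1)[OF I] layers_disjoint[of _ v _ f] S' f by blast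

lemma new_transversal_in_new_layer: "x \<in> J \<Longrightarrow> \<exists>v\<in>V. x \<in> L (v, f) \<and> x \<noteq> h v"
  using indep_transversalD(1)[OF J] unfolding remaining_def by blast

lemma new_transversal_avoids_old_layers: "x \<in> J \<Longrightarrow> v \<in> V \<Longrightarrow> s \<in> S' \<Longrightarrow> x \<notin> L (v, s)"
  using new_transversal_in_new_layer layers_disjoint[of _ v f s] S' f by blast

lemma independent_union: "x \<in> I \<union> J \<Longrightarrow> y \<in> I \<union> J \<Longrightarrow> \<not> EH x y"
proof -
  have blocked: "\<not> EH y x" if yI: "y \<in> I" and xJ: "x \<in> J" for x y
  proof
    assume e: "EH y x"
    obtain v where "v \<in> V" "x \<in> L (v, f)" "x \<noteq> h v" using new_transversal_in_new_layer[OF xJ] by blast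
    thus False using h e yI unfolding blocks_def by blast
  qed
  assume "x \<in> I \<union> J" "y \<in> I \<union> J"
  then consider "x \<in> I" "y \<in> I" | "x \<in> J" "y \<in> J" | "x \<in> I" "y \<in> J" | "x \<in> J" "y \<in> I" by blast
  thus "\<not> EH x y"
  proof cases
    case 1 thus ?thesis using indep_transversalD(2)[OF I] by blast
  next
    case 2
    hence "x \<in> (\<Union>v\<in>V. remaining f h v)" "y \<in> (\<Union>v\<in>V. remaining f h v)"
      using indep_transversalD(1)[OF J] by auto
    thus ?thesis using indep_transversalD(2)[OF J 2] unfolding induced_edges_def by blast
  next
    case 3 thus ?thesis using blocked by blast
  next
    case 4 thus ?thesis using blocked EH_sym by blast
  qed
qed

lemma card_union_Int_L:
  assumes v: "v \<in> V" and s: "s \<in> insert f S'"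
  shows "card ((I \<union> J) \<inter> L (v, s)) = 1"
proof (cases "s = f")
  case True
  have "(I \<union> J) \<inter> L (v, f) = J \<inter> remaining f h v"
  proof (intro equalityI subsetI)
    fix x assume x: "x \<in> (I \<union> J) \<inter> L (v, f)"
    hence xJ: "x \<in> J" using old_transversal_avoids_new_layer v by blast
    then obtain u where u: "u \<in> V" "x \<in> L (u, f)" "x \<noteq> h u"
      using new_transversal_in_new_layer by blast
    have "u = v" using in_L_unique[of "(u, f)" "(v, f)" x] u x v f by auto
    thus "x \<in> J \<inter> remaining f h v" using xJ u unfolding remaining_def by blast
  qed (auto simp: remaining_def)
  thus ?thesis using indep_transversalD(3)[OF J v] True by simp
next
  case False
  hence "(I \<union> J) \<inter> L (v, s) = I \<inter> L (v, s)" using new_transversal_avoids_old_layers v s by blast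
  thus ?thesis using indep_transversalD(3)[OF I, of "(v, s)"] v s False by auto
qed

lemma indep_transversal_insert_layer:
  "indep_transversal (V \<times> insert f S') L (\<Union>w\<in>V \<times> insert f S'. L w) EH (I \<union> J)"
  unfolding indep_transversal_def
proof (intro conjI ballI)
  show "I \<union> J \<subseteq> (\<Union>w\<in>V \<times> insert f S'. L w)"
    using indep_transversalD(1)[OF I] indep_transversalD(1)[OF J] unfolding remaining_def by blast
  show "\<And>x y. x \<in> I \<union> J \<Longrightarrow> y \<in> I \<union> J \<Longrightarrow> \<not> EH x y" by (rule independent_union)
  show "\<And>w. w \<in> V \<times> insert f S' \<Longrightarrow> card ((I \<union> J) \<inter> L w) = 1"
    using card_union_Int_L by blast
qed

end

lemma prob_layer_packing_new_layer:
  assumes f: "f \<in> VF" and h: "\<And>v. v \<in> V \<Longrightarrow> h v \<in> L (v, f)" and v: "v \<in> V" and x: "x \<in> L (v, f)"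
  shows "measure_pmf.prob (layer_packing f h) {J. x \<in> J} = (if h v = x then 0 else 1 / real k)"
proof (cases "h v = x")
  case True
  have "x \<notin> J" if J: "J \<in> set_pmf (layer_packing f h)" for J
  proof
    assume "x \<in> J"
    then obtain u where "u \<in> V" "x \<in> L (u, f)" "x \<noteq> h u"
      using layer_packing_subset[OF f h J] unfolding remaining_def by blast
    thus False using in_L_unique[of "(u, f)" "(v, f)" x] v x f True by auto
  qed
  hence "measure_pmf.prob (layer_packing f h) {J. x \<in> J} = measure_pmf.prob (layer_packing f h) {}"
    by (intro measure_pmf_prob_cong) auto
  thus ?thesis using True by simp
next
  case False
  have "x \<in> remaining f h v" using x False unfolding remaining_def by auto
  moreover have "card (remaining f h v) = k"
    using k_fold_cover_remaining[OF f h] v unfolding k_fold_cover_def by auto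
  ultimately show ?thesis
    using is_fractional_packing_layer_packing[OF f h] v False unfolding is_fractional_packing_def by auto
qed

lemma prob_layer_packing_old_layer:
  assumes f: "f \<in> VF" and h: "\<And>v. v \<in> V \<Longrightarrow> h v \<in> L (v, f)"
    and "u \<in> V" "s \<in> VF" "s \<noteq> f" "x \<in> L (u, s)"
  shows "measure_pmf.prob (layer_packing f h) {J. x \<in> J} = 0"
proof -
  have "x \<notin> J" if "J \<in> set_pmf (layer_packing f h)" for J
    using layer_packing_subset[OF f h that] layers_disjoint[of u _ s f x] assms
    unfolding remaining_def by blast
  hence "measure_pmf.prob (layer_packing f h) {J. x \<in> J} = measure_pmf.prob (layer_packing f h) {}"
    by (intro measure_pmf_prob_cong) auto
  thus ?thesis by simp
qed

definition extension :: "'c \<Rightarrow> 'b set pmf \<Rightarrow> ('b set \<Rightarrow> ('a \<Rightarrow> 'b) pmf) \<Rightarrow> 'b set pmf" where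
  "extension f p R = p \<bind> (\<lambda>I. R I \<bind> (\<lambda>h. map_pmf ((\<union>) I) (layer_packing f h)))"

context
  fixes S' :: "'c set" and f :: 'c and p :: "'b set pmf" and R :: "'b set \<Rightarrow> ('a \<Rightarrow> 'b) pmf"
  assumes S': "S' \<subseteq> VF" and f: "f \<in> VF" "f \<notin> S'" and p: "partial_packing S' p"
    and R_blocks: "\<And>I h. I \<in> set_pmf p \<Longrightarrow> h \<in> set_pmf (R I) \<Longrightarrow> blocks f I h"
begin

lemma prob_extension:
  "measure_pmf.prob (extension f p R) {K. x \<in> K}
     = (\<integral>I. (\<integral>h. (if x \<in> I then 1 else measure_pmf.prob (layer_packing f h) {J. x \<in> J}) \<partial>R I) \<partial>p)"
  unfolding extension_def measure_bind_pmf
proof (intro integral_pmf_cong)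
  fix I h assume I: "I \<in> set_pmf p" and h: "h \<in> set_pmf (R I)"
  have "measure_pmf.prob (layer_packing f h) {J. x \<in> I \<union> J}
          = (if x \<in> I then 1 else measure_pmf.prob (layer_packing f h) {J. x \<in> J})"
    by (cases "x \<in> I") (simp_all add: measure_pmf.prob_space)
  thus "measure_pmf.prob (map_pmf ((\<union>) I) (layer_packing f h)) {K. x \<in> K}
          = (if x \<in> I then 1 else measure_pmf.prob (layer_packing f h) {J. x \<in> J})" by simp
qed

lemma packing_avoids_new_layer:
  assumes "I \<in> set_pmf p" "v \<in> V" "x \<in> L (v, f)"
  shows "x \<notin> I"
proof
  assume "x \<in> I"
  then obtain u s where "u \<in> V" "s \<in> S'" "x \<in> L (u, s)"
    using indep_transversalD(1)[OF partial_packing_transversal[OF p assms(1)]] by blast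
  thus False using layers_disjoint[of u v s f x] assms S' f by blast
qed

lemma prob_extension_old_layer:
  assumes v: "v \<in> V" and s: "s \<in> S'" and x: "x \<in> L (v, s)"
  shows "measure_pmf.prob (extension f p R) {K. x \<in> K} = 1 / real (Suc k)"
proof -
  have "measure_pmf.prob (extension f p R) {K. x \<in> K} = (\<integral>I. (\<integral>h. indicator {I. x \<in> I} I \<partial>R I) \<partial>p)"
    unfolding prob_extension
  proof (intro integral_pmf_cong)
    fix I h assume I: "I \<in> set_pmf p" and h: "h \<in> set_pmf (R I)"
    have "measure_pmf.prob (layer_packing f h) {J. x \<in> J} = 0"
      using prob_layer_packing_old_layer[OF f(1) blocks_in_layer[OF R_blocks[OF I h]] v _ _ x] s S' f
      by blast
    thus "(if x \<in> I then 1 else measure_pmf.prob (layer_packing f h) {J. x \<in> J}) = indicator {I. x \<in> I} I"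
      by simp
  qed
  also have "\<dots> = measure_pmf.prob p {I. x \<in> I}" by simp
  also have "\<dots> = 1 / real (card (L (v, s)))"
    using p v s x unfolding partial_packing_def is_fractional_packing_def by blast
  finally show ?thesis using card_L v s S' by auto
qed

lemma prob_extension_new_layer:
  assumes v: "v \<in> V" and x: "x \<in> L (v, f)"
    and R_uniform: "measure_pmf.prob (p \<bind> R) {h. h v = x} = 1 / real (Suc k)"
  shows "measure_pmf.prob (extension f p R) {K. x \<in> K} = 1 / real (Suc k)"
proof -
  have "measure_pmf.prob (extension f p R) {K. x \<in> K}
          = (\<integral>I. (\<integral>h. 1 / real k * indicator {h. h v \<noteq> x} h \<partial>R I) \<partial>p)"
    unfolding prob_extension
  proof (intro integral_pmf_cong)
    fix I h assume I: "I \<in> set_pmf p" and h: "h \<in> set_pmf (R I)"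
    show "(if x \<in> I then 1 else measure_pmf.prob (layer_packing f h) {J. x \<in> J})
            = 1 / real k * indicator {h. h v \<noteq> x} h"
      using packing_avoids_new_layer[OF I v x]
        prob_layer_packing_new_layer[OF f(1) blocks_in_layer[OF R_blocks[OF I h]] v x] by simp
  qed
  also have "\<dots> = 1 / real k * (\<integral>I. measure_pmf.prob (R I) {h. h v \<noteq> x} \<partial>p)" by simp
  also have "\<dots> = 1 / real k * measure_pmf.prob (p \<bind> R) {h. h v \<noteq> x}"
    by (simp add: measure_bind_pmf)
  also have "measure_pmf.prob (p \<bind> R) {h. h v \<noteq> x} = 1 - 1 / real (Suc k)"
    using R_uniform by (simp add: measure_pmf_prob_not)
  finally show ?thesis using k_pos by (simp add: field_simps)
qed

lemma partial_packing_extension: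
  assumes R_uniform: "\<And>v x. v \<in> V \<Longrightarrow> x \<in> L (v, f) \<Longrightarrow>
                        measure_pmf.prob (p \<bind> R) {h. h v = x} = 1 / real (Suc k)"
  shows "partial_packing (insert f S') (extension f p R)"
  unfolding partial_packing_def is_fractional_packing_def
proof (intro conjI ballI subsetI CollectI)
  fix K assume "K \<in> set_pmf (extension f p R)"
  then obtain I h J where I: "I \<in> set_pmf p" and h: "h \<in> set_pmf (R I)"
    and J: "J \<in> set_pmf (layer_packing f h)" and K: "K = I \<union> J"
    unfolding extension_def by auto
  have "indep_transversal V (remaining f h) (\<Union>v\<in>V. remaining f h v)
          (induced_edges (\<Union>v\<in>V. remaining f h v) EH) J"
    using is_fractional_packing_layer_packing[OF f(1) blocks_in_layer[OF R_blocks[OF I h]]] J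
    unfolding is_fractional_packing_def by blast
  thus "indep_transversal (V \<times> insert f S') L (\<Union>w\<in>V \<times> insert f S'. L w) EH K"
    unfolding K by (rule indep_transversal_insert_layer[OF S' f partial_packing_transversal[OF p I] R_blocks[OF I h]])
next
  fix w x assume "w \<in> V \<times> insert f S'" "x \<in> L w"
  then obtain v s where w: "w = (v, s)" "v \<in> V" "s \<in> insert f S'" and x: "x \<in> L (v, s)" by blast
  have "card (L w) = Suc k" using card_L w S' f by auto
  moreover have "measure_pmf.prob (extension f p R) {K. x \<in> K} = 1 / real (Suc k)"
  proof (cases "s = f")
    case True
    thus ?thesis using prob_extension_new_layer[OF w(2) _ R_uniform[OF w(2)]] x by simp
  next
    case False
    thus ?thesis using prob_extension_old_layer[OF w(2) _ x] w(3) by simp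
  qed
  ultimately show "measure_pmf.prob (extension f p R) {I. x \<in> I} = 1 / real (card (L w))" by simp
qed

end

lemma layer_matching:
  assumes v: "v \<in> V" and gf: "g \<in> VF" "f \<in> VF" "EF g f"
  shows "\<exists>\<sigma>. bij_betw \<sigma> (L (v, g)) (L (v, f)) \<and> (\<forall>y\<in>L (v, g). \<forall>x\<in>L (v, f). EH y x \<longrightarrow> x = \<sigma> y)"
proof (rule matching_extends_to_bij)
  have EW: "cart_prod_edges E EF (v, g) (v, f)" using gf unfolding cart_prod_edges_def by auto
  show "finite (L (v, g))" "finite (L (v, f))" using finite_L v gf by auto
  show "card (L (v, g)) = card (L (v, f))" using card_L v gf by auto
  show "\<And>y x1 x2. y \<in> L (v, g) \<Longrightarrow> x1 \<in> L (v, f) \<Longrightarrow> x2 \<in> L (v, f) \<Longrightarrow> EH y x1 \<Longrightarrow> EH y x2 \<Longrightarrow> x1 = x2"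
    using matching_right[of "(v, g)" "(v, f)"] v gf EW by blast
  show "\<And>x y1 y2. x \<in> L (v, f) \<Longrightarrow> y1 \<in> L (v, g) \<Longrightarrow> y2 \<in> L (v, g) \<Longrightarrow> EH y1 x \<Longrightarrow> EH y2 x \<Longrightarrow> y1 = y2"
    using matching_left[of "(v, g)" "(v, f)"] v gf EW by blast
qed

definition uniform_blocking :: "'c \<Rightarrow> 'b set pmf \<Rightarrow> ('b set \<Rightarrow> ('a \<Rightarrow> 'b) pmf) \<Rightarrow> bool" where
  "uniform_blocking f p R \<longleftrightarrow> (\<forall>I\<in>set_pmf p. \<forall>h\<in>set_pmf (R I). blocks f I h)
     \<and> (\<forall>v\<in>V. \<forall>x\<in>L (v, f). measure_pmf.prob (p \<bind> R) {h. h v = x} = 1 / real (Suc k))"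

lemma blocks_via_unique_neighbour:
  assumes S': "S' \<subseteq> VF" and f: "f \<in> VF" "f \<notin> S'"
    and I: "indep_transversal (V \<times> S') L (\<Union>w\<in>V \<times> S'. L w) EH I"
    and g: "g \<in> S'" and unique: "\<And>g'. g' \<in> S' \<Longrightarrow> EF f g' \<Longrightarrow> g' = g"
    and h: "\<And>v. v \<in> V \<Longrightarrow>
              \<exists>y. I \<inter> L (v, g) = {y} \<and> h v \<in> L (v, f) \<and> (\<forall>x\<in>L (v, f). EH y x \<longrightarrow> x = h v)"
  shows "blocks f I h"
  unfolding blocks_def
proof (intro ballI conjI)
  fix v assume v: "v \<in> V"
  obtain y0 where y0: "I \<inter> L (v, g) = {y0}" "h v \<in> L (v, f)" "\<forall>x\<in>L (v, f). EH y0 x \<longrightarrow> x = h v"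
    using h[OF v] by blast
  show "h v \<in> L (v, f)" by (fact y0(2))
  fix y x assume y: "y \<in> I" and x: "x \<in> L (v, f)"
  show "EH y x \<longrightarrow> x = h v"
  proof
    assume e: "EH y x"
    obtain u s where us: "u \<in> V" "s \<in> S'" "y \<in> L (u, s)" using indep_transversalD(1)[OF I] y by blast
    have s: "s \<in> VF" "s \<noteq> f" using us(2) S' f by auto
    have "u = v" "EF s f" using edge_between_layers[OF us(1) v s(1) f(1) s(2) us(3) x e] by auto
    moreover have "EF f s" using \<open>EF s f\<close> graph_F unfolding graph_def by blast
    ultimately have "y \<in> I \<inter> L (v, g)" using unique[OF us(2)] us(3) y by blast
    hence "y = y0" using y0(1) by auto
    thus "x = h v" using y0(3) x e by blast
  qed
qed

text \<open>If f has a neighbour g in S', the blocked vertex of L (v, f) is determined: it is the partner,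
  under the matching between the layers g and f, of the vertex chosen in L (v, g).\<close>
lemma uniform_blocking_via_neighbour:
  assumes S': "S' \<subseteq> VF" and f: "f \<in> VF" "f \<notin> S'" and p: "partial_packing S' p"
    and g: "g \<in> S'" "EF f g" and unique: "\<And>g'. g' \<in> S' \<Longrightarrow> EF f g' \<Longrightarrow> g' = g"
  shows "\<exists>R. uniform_blocking f p R"
proof -
  have gV: "g \<in> VF" using g S' by auto
  have "EF g f" using g graph_F unfolding graph_def by blast
  hence "\<forall>v\<in>V. \<exists>\<sigma>. bij_betw \<sigma> (L (v, g)) (L (v, f)) \<and> (\<forall>y\<in>L (v, g). \<forall>x\<in>L (v, f). EH y x \<longrightarrow> x = \<sigma> y)"
    using layer_matching gV f(1) by blast
  then obtain \<sigma> where \<sigma>: "\<And>v. v \<in> V \<Longrightarrow> bij_betw (\<sigma> v) (L (v, g)) (L (v, f))"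
    and \<sigma>_match: "\<And>v y x. v \<in> V \<Longrightarrow> y \<in> L (v, g) \<Longrightarrow> x \<in> L (v, f) \<Longrightarrow> EH y x \<Longrightarrow> x = \<sigma> v y"
    by metis
  define hf where "hf = (\<lambda>I v. \<sigma> v (THE y. y \<in> I \<inter> L (v, g)))"
  have chosen: "\<exists>y. I \<inter> L (v, g) = {y} \<and> hf I v = \<sigma> v y" if "I \<in> set_pmf p" "v \<in> V" for I v
  proof -
    have "card (I \<inter> L (v, g)) = 1" using p that g
      unfolding partial_packing_def is_fractional_packing_def indep_transversal_def by auto
    then obtain y where "I \<inter> L (v, g) = {y}" by (rule card_1_singletonE)
    thus ?thesis unfolding hf_def by auto
  qed
  show ?thesis unfolding uniform_blocking_def
  proof (intro exI[of _ "\<lambda>I. return_pmf (hf I)"] conjI ballI)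
    fix I h assume I: "I \<in> set_pmf p" and "h \<in> set_pmf (return_pmf (hf I))"
    hence h: "h = hf I" by simp
    show "blocks f I h"
    proof (rule blocks_via_unique_neighbour[OF S' f partial_packing_transversal[OF p I] g(1) unique])
      fix v assume v: "v \<in> V"
      obtain y0 where y0: "I \<inter> L (v, g) = {y0}" "h v = \<sigma> v y0" using chosen[OF I v] h by blast
      have y0L: "y0 \<in> L (v, g)" using y0(1) by auto
      have "h v \<in> L (v, f)" using y0(2) bij_betwE[OF \<sigma>[OF v]] y0L by simp
      moreover have "\<forall>x\<in>L (v, f). EH y0 x \<longrightarrow> x = h v" using \<sigma>_match[OF v y0L] y0(2) by auto
      ultimately show "\<exists>y. I \<inter> L (v, g) = {y} \<and> h v \<in> L (v, f) \<and> (\<forall>x\<in>L (v, f). EH y x \<longrightarrow> x = h v)"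
        using y0(1) by blast
    qed
  next
    fix v x assume v: "v \<in> V" and x: "x \<in> L (v, f)"
    obtain y1 where y1: "y1 \<in> L (v, g)" "\<sigma> v y1 = x"
      using \<sigma>[OF v] x unfolding bij_betw_def by (metis imageE)
    have "measure_pmf.prob (p \<bind> (\<lambda>I. return_pmf (hf I))) {h. h v = x} = measure_pmf.prob p {I. hf I v = x}"
      by (simp add: map_pmf_def[symmetric])
    also have "\<dots> = measure_pmf.prob p {I. y1 \<in> I}"
    proof (rule measure_pmf_prob_cong)
      fix I assume I: "I \<in> set_pmf p"
      obtain y0 where y0: "I \<inter> L (v, g) = {y0}" "hf I v = \<sigma> v y0" using chosen[OF I v] by blast
      have "\<sigma> v y0 = \<sigma> v y1 \<longleftrightarrow> y0 = y1"
        using \<sigma>[OF v] y0 y1 unfolding bij_betw_def inj_on_def by blast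
      thus "I \<in> {I. hf I v = x} \<longleftrightarrow> I \<in> {I. y1 \<in> I}" using y0 y1 by auto
    qed
    also have "\<dots> = 1 / real (card (L (v, g)))"
      using p v g(1) y1(1) unfolding partial_packing_def is_fractional_packing_def by blast
    also have "\<dots> = 1 / real (Suc k)" using card_L v gV by simp
    finally show "measure_pmf.prob (p \<bind> (\<lambda>I. return_pmf (hf I))) {h. h v = x} = 1 / real (Suc k)" .
  qed
qed

text \<open>If f has no neighbour in S', no vertex of layer f is adjacent to the partial transversal, so
  any h blocks; a uniformly random index into enumerations of the lists L (v, f) is uniform.\<close>
lemma uniform_blocking_isolated:
  assumes S': "S' \<subseteq> VF" and f: "f \<in> VF" "f \<notin> S'" and p: "partial_packing S' p"
    and isolated: "\<And>g. g \<in> S' \<Longrightarrow> \<not> EF f g"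
  shows "\<exists>R. uniform_blocking f p R"
proof -
  have "\<forall>v\<in>V. \<exists>\<psi>. bij_betw \<psi> {0..<Suc k} (L (v, f))"
    using finite_L card_L f ex_bij_betw_nat_finite by (metis SigmaI)
  then obtain \<psi> where \<psi>: "\<And>v. v \<in> V \<Longrightarrow> bij_betw (\<psi> v) {0..<Suc k} (L (v, f))" by metis
  define R0 where "R0 = map_pmf (\<lambda>i v. \<psi> v i) (pmf_of_set {0..<Suc k})"
  show ?thesis unfolding uniform_blocking_def
  proof (intro exI[of _ "\<lambda>_. R0"] conjI ballI)
    fix I h assume I: "I \<in> set_pmf p" and "h \<in> set_pmf R0"
    then obtain i where i: "i < Suc k" "h = (\<lambda>v. \<psi> v i)" unfolding R0_def by auto
    show "blocks f I h" unfolding blocks_def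
    proof (rule ballI, rule conjI)
      fix v assume v: "v \<in> V"
      show "h v \<in> L (v, f)" using i \<psi>[OF v] unfolding bij_betw_def by auto
      show "\<forall>y\<in>I. \<forall>x\<in>L (v, f). EH y x \<longrightarrow> x = h v"
      proof (intro ballI impI)
        fix y x assume y: "y \<in> I" and x: "x \<in> L (v, f)" and e: "EH y x"
        obtain u s where us: "u \<in> V" "s \<in> S'" "y \<in> L (u, s)"
          using indep_transversalD(1)[OF partial_packing_transversal[OF p I]] y by blast
        have "EF s f" using edge_between_layers[of u v s f y x] us v x e S' f by auto
        thus "x = h v" using isolated us graph_F unfolding graph_def by blast
      qed
    qed
  next
    fix v x assume v: "v \<in> V" and x: "x \<in> L (v, f)"
    obtain i1 where i1: "i1 < Suc k" "\<psi> v i1 = x"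
      using \<psi>[OF v] x unfolding bij_betw_def by (metis imageE atLeastLessThan_iff)
    have "{0..<Suc k} \<inter> {i. \<psi> v i = x} = {i1}"
      using i1 \<psi>[OF v] unfolding bij_betw_def inj_on_def by auto
    hence "measure_pmf.prob R0 {h. h v = x} = 1 / real (Suc k)"
      unfolding R0_def by (simp add: measure_pmf_of_set vimage_def)
    thus "measure_pmf.prob (p \<bind> (\<lambda>_. R0)) {h. h v = x} = 1 / real (Suc k)" by simp
  qed
qed

lemma partial_packing_exists: "S \<subseteq> VF \<Longrightarrow> \<exists>p. partial_packing S p"
proof (induction "card S" arbitrary: S rule: less_induct)
  case less
  show ?case
  proof (cases "S = {}")
    case True
    show ?thesis
      by (rule exI[of _ "return_pmf {}"])
        (simp add: True partial_packing_def is_fractional_packing_def indep_transversal_def)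
  next
    case False
    obtain f where fS: "f \<in> S" and leaf: "\<And>g1 g2. g1 \<in> S \<Longrightarrow> g2 \<in> S \<Longrightarrow> EF f g1 \<Longrightarrow> EF f g2 \<Longrightarrow> g1 = g2"
      using acyclic_subset_has_leaf[OF graph_F acyclic_F less.prems False] by blast
    define S' where "S' = S - {f}"
    have finS: "finite S" using less.prems graph_F finite_subset unfolding graph_def by blast
    have S': "S' \<subseteq> VF" and f: "f \<in> VF" "f \<notin> S'" and S: "S = insert f S'"
      using fS less.prems unfolding S'_def by auto
    obtain p where p: "partial_packing S' p"
      using less.hyps[of S'] S' finS fS unfolding S'_def by (meson card_Diff1_less)
    have "\<exists>R. uniform_blocking f p R"
    proof (cases "\<exists>g\<in>S'. EF f g")
      case True
      then obtain g where "g \<in> S'" "EF f g" by blast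
      moreover have "\<And>g'. g' \<in> S' \<Longrightarrow> EF f g' \<Longrightarrow> g' = g" using leaf \<open>g \<in> S'\<close> \<open>EF f g\<close> unfolding S'_def by blast
      ultimately show ?thesis using uniform_blocking_via_neighbour[OF S' f p] by blast
    next
      case False
      thus ?thesis using uniform_blocking_isolated[OF S' f p] by blast
    qed
    then obtain R where "uniform_blocking f p R" by blast
    hence "partial_packing (insert f S') (extension f p R)"
      using partial_packing_extension[OF S' f p] unfolding uniform_blocking_def by blast
    thus ?thesis using S by blast
  qed
qed

theorem has_fractional_packing_product: "has_fractional_packing (V \<times> VF) L VH EH"
proof -
  obtain p where "partial_packing VF p" using partial_packing_exists by blast
  hence "is_fractional_packing (V \<times> VF) L VH EH p"
    using card_L unfolding partial_packing_def is_fractional_packing_def VH_eq by auto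
  thus ?thesis unfolding has_fractional_packing_iff by blast
qed

end

lemma covers_pack_product_tree:
  fixes V :: "'a set" and VF :: "'c set"
  assumes F: "graph VF EF" "\<nexists>cs. is_cycle VF EF cs" and k: "k \<ge> 1"
    and G: "covers_pack TYPE('a \<times> nat) k V E"
  shows "covers_pack TYPE('b) (Suc k) (V \<times> VF) (cart_prod_edges E EF)"
  unfolding covers_pack_def
proof (intro allI impI)
  fix L :: "'a \<times> 'c \<Rightarrow> 'b set" and VH EH
  assume "k_fold_cover (Suc k) (V \<times> VF) (cart_prod_edges E EF) L VH EH"
  hence "product_cover V E VF EF L VH EH k"
    using F k covers_pack_change_type[OF G]
    unfolding product_cover_def product_cover_axioms_def k_fold_cover_iff_locale by blast
  then interpret product_cover V E VF EF L VH EH k .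
  show "has_fractional_packing (V \<times> VF) L VH EH" by (rule has_fractional_packing_product)
qed

theorem mainTheorem12:
  fixes V :: "'a set" and E :: "'a \<Rightarrow> 'a \<Rightarrow> bool"
    and VF :: "'c set" and EF :: "'c \<Rightarrow> 'c \<Rightarrow> bool"
  assumes "graph V E" and "tree VF EF"
  shows "chi_c_bullet (V \<times> VF) (cart_prod_edges E EF) \<le> chi_c_bullet V E + 1"
proof -
  have F: "graph VF EF" "\<nexists>cs. is_cycle VF EF cs" and "VF \<noteq> {}"
    using assms(2) unfolding tree_def by auto
  then obtain f0 where f0: "f0 \<in> VF" by blast
  define P where "P = (\<lambda>k. k \<ge> 1 \<and> covers_pack TYPE('a \<times> nat) k V E)"
  define Q where "Q = (\<lambda>k. k \<ge> 1 \<and> covers_pack TYPE(('a \<times> 'c) \<times> nat) k (V \<times> VF) (cart_prod_edges E EF))"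
  have "Least Q \<le> Least P + 1"
  proof (cases "\<exists>k. P k")
    case True
    hence "P (Least P)" by (rule LeastI_ex)
    hence "Q (Suc (Least P))" unfolding P_def Q_def by (auto intro: covers_pack_product_tree[OF F])
    thus ?thesis by (simp add: Least_le)
  next
    case False
    have "\<not> Q k" for k
      using False covers_pack_layer[OF covers_pack_change_type F(1) f0] unfolding P_def Q_def by blast
    hence "Q = P" using False by auto
    thus ?thesis by simp
  qed
  thus ?thesis unfolding chi_c_bullet_altdef P_def Q_def .
qed

end
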